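(* Let $T>0$, $\alpha>0$, $\beta>0$, $\sigma>0$, $u_1>0$, let $N$ be a positive integer and $R_0\in\mathbb R$, and let $\hat u$ be an optimal control for the problem $$\int_0^T\big(\alpha R(t)+\beta u(t)\big)\,dt\to\inf,\qquad \dot R(t)=-u(t)R(t)+N\sigma^2,\qquad R(0)=R_0,\qquad 0\le u(t)\le u_1 .$$ Then there exists $\varepsilon>0$ such that $\hat u(t)=0$ for all $t\in(T-\varepsilon,T)$.
   Context: Admissible controls are functions $u\in L^\infty[0,T]$ with $0\le u(t)\le u_1$ for a.e. $t$ (identified up to a.e. equality); the corresponding state $R$ is the absolutely continuous solution of $\dot R=-uR+N\sigma^2$, $R(0)=R_0$. An optimal control is an admissible control minimizing the integral functional. *)

theory Defs
  imports "HOL-Analysis.Analysis"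
begin

definition admissible :: "real \<Rightarrow> real \<Rightarrow> (real \<Rightarrow> real) \<Rightarrow> bool" where
  "admissible T u1 u \<longleftrightarrow>
     set_borel_measurable lborel {0..T} u \<and>
     (AE t in lborel. t \<in> {0..T} \<longrightarrow> 0 \<le> u t \<and> u t \<le> u1)"

text \<open>R is the absolutely continuous (Caratheodory) solution of
  R' = -u R + N sigma^2, R(0) = R0 on [0,T], written in integral form.\<close>
definition is_state :: "real \<Rightarrow> nat \<Rightarrow> real \<Rightarrow> real \<Rightarrow> (real \<Rightarrow> real) \<Rightarrow> (real \<Rightarrow> real) \<Rightarrow> bool" where
  "is_state T N \<sigma> R0 u R \<longleftrightarrow>
     continuous_on {0..T} R \<and> R 0 = R0 \<and>
     (\<forall>t\<in>{0..T}. R t = R0 + (LINT s:{0..t}|lborel. real N * \<sigma>\<^sup>2 - u s * R s))"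

definition cost :: "real \<Rightarrow> real \<Rightarrow> real \<Rightarrow> (real \<Rightarrow> real) \<Rightarrow> (real \<Rightarrow> real) \<Rightarrow> real" where
  "cost T \<alpha> \<beta> u R = (LINT t:{0..T}|lborel. \<alpha> * R t + \<beta> * u t)"

definition optimal_control ::
  "real \<Rightarrow> real \<Rightarrow> real \<Rightarrow> real \<Rightarrow> real \<Rightarrow> nat \<Rightarrow> real \<Rightarrow> (real \<Rightarrow> real) \<Rightarrow> bool" where
  "optimal_control T \<alpha> \<beta> \<sigma> u1 N R0 uh \<longleftrightarrow>
     admissible T u1 uh \<and> (\<exists>R. is_state T N \<sigma> R0 uh R) \<and>
     (\<forall>R v S. is_state T N \<sigma> R0 uh R \<longrightarrow> admissible T u1 v \<longrightarrow> is_state T N \<sigma> R0 v S \<longrightarrow>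
        cost T \<alpha> \<beta> uh R \<le> cost T \<alpha> \<beta> v S)"

end

theory Submission imports Defs begin

text \<open>Switch the control off on a final interval \<open>(a, T]\<close>. Afterwards the state grows
  linearly, so it exceeds the original state by \<open>\<integral>\<^sub>a\<^sup>s u R \<le> M \<integral>\<^sub>a\<^sup>T u\<close>, where \<open>M\<close> bounds \<open>|R|\<close>.
  Hence the cost changes by at most \<open>(\<alpha> M (T - a) - \<beta>) \<integral>\<^sub>a\<^sup>T u\<close>, which is negative for
  \<open>T - a < \<beta> / (\<alpha> M)\<close> unless \<open>u\<close> vanishes almost everywhere on \<open>(a, T)\<close>; so an optimal
  control must vanish there.\<close>

lemma set_borel_measurable_continuous_on_Icc:
  fixes X :: "real \<Rightarrow> real"
  assumes "continuous_on {a..b} X"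
  shows "set_borel_measurable lborel {a..b} X"
  unfolding set_borel_measurable_def
  using borel_measurable_continuous_on_indicator[OF _ assms] by simp

lemma set_borel_measurable_mult:
  fixes f g :: "'a \<Rightarrow> real"
  assumes "set_borel_measurable M A f" "set_borel_measurable M A g"
  shows "set_borel_measurable M A (\<lambda>x. f x * g x)"
proof -
  have "(\<lambda>x. (indicator A x *\<^sub>R f x) * (indicator A x *\<^sub>R g x)) \<in> borel_measurable M"
    using assms unfolding set_borel_measurable_def by measurable
  moreover have "(\<lambda>x. (indicator A x *\<^sub>R f x) * (indicator A x *\<^sub>R g x))
      = (\<lambda>x. indicator A x *\<^sub>R (f x * g x))"
    by (auto simp: indicator_def)
  ultimately show ?thesis unfolding set_borel_measurable_def by simp
qed

lemma set_integrable_bounded_mult_continuous: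
  fixes w X :: "real \<Rightarrow> real"
  assumes w_meas: "set_borel_measurable lborel {a..b} w"
    and w_bound: "AE t in lborel. t \<in> {a..b} \<longrightarrow> \<bar>w t\<bar> \<le> B"
    and X_cont: "continuous_on {a..b} X"
  shows "set_integrable lborel {a..b} (\<lambda>s. w s * X s)"
proof -
  have "bounded (X ` {a..b})"
    using compact_imp_bounded compact_continuous_image[OF X_cont compact_Icc] by blast
  then obtain M where M: "\<forall>t\<in>{a..b}. \<bar>X t\<bar> \<le> M"
    unfolding bounded_iff by auto
  have meas: "set_borel_measurable lborel {a..b} (\<lambda>s. w s * X s)"
    using set_borel_measurable_mult w_meas set_borel_measurable_continuous_on_Icc[OF X_cont] .
  have bound: "AE t in lborel. t \<in> {a..b} \<longrightarrow> norm (w t * X t) \<le> norm (B * M)"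
    using w_bound
  proof eventually_elim
    case (elim t)
    show ?case
    proof
      assume t: "t \<in> {a..b}"
      have "\<bar>w t * X t\<bar> \<le> B * M"
        unfolding abs_mult using elim t M by (intro mult_mono) auto
      then show "norm (w t * X t) \<le> norm (B * M)" by simp
    qed
  qed
  have "set_integrable lborel {a..b} (\<lambda>_. B * M)"
    by (rule borel_integrable_atLeastAtMost') simp
  then show ?thesis
    using meas bound by (rule set_integrable_bound)
qed

lemma set_integral_split_Icc:
  fixes f :: "real \<Rightarrow> real"
  assumes "set_integrable lborel {a..c} f" "a \<le> b" "b \<le> c"
  shows "(LINT s:{a..c}|lborel. f s) = (LINT s:{a..b}|lborel. f s) + (LINT s:{b<..c}|lborel. f s)"
proof -
  have "{a..c} = {a..b} \<union> {b<..c}" using assms by auto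
  moreover have "set_integrable lborel {a..b} f" "set_integrable lborel {b<..c} f"
    using assms by (auto intro: set_integrable_subset)
  moreover have "{a..b} \<inter> {b<..c} = {}" by auto
  ultimately show ?thesis by (simp add: set_integral_Un)
qed

lemma set_integral_mono_set_nonneg:
  fixes f :: "'a \<Rightarrow> real"
  assumes "set_integrable M A f" "set_integrable M B f" "A \<subseteq> B"
    and "AE x in M. x \<in> B \<longrightarrow> 0 \<le> f x"
  shows "(LINT x:A|M. f x) \<le> (LINT x:B|M. f x)"
  using assms unfolding set_integrable_def set_lebesgue_integral_def
  by (intro integral_mono_AE) (auto simp: indicator_def elim!: eventually_mono)

lemma set_integral_nonneg_eq_0_AE:
  fixes f :: "'a \<Rightarrow> real"
  assumes "set_integrable M A f" "AE t in M. t \<in> A \<longrightarrow> 0 \<le> f t"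
    and "(LINT t:A|M. f t) = 0"
  shows "AE t in M. t \<in> A \<longrightarrow> f t = 0"
proof -
  have "AE t in M. indicator A t *\<^sub>R f t = 0"
    using assms integral_nonneg_eq_0_iff_AE[of M "\<lambda>t. indicator A t *\<^sub>R f t"]
    unfolding set_integrable_def set_lebesgue_integral_def
    by (auto simp: indicator_def elim!: eventually_mono)
  then show ?thesis by eventually_elim (simp add: indicator_def)
qed

lemma admissible_set_integrable_mult:
  assumes "admissible T u1 u" "continuous_on {0..T} X"
  shows "set_integrable lborel {0..T} (\<lambda>s. u s * X s)"
proof -
  have "AE t in lborel. t \<in> {0..T} \<longrightarrow> \<bar>u t\<bar> \<le> u1"
    using assms(1) unfolding admissible_def by (auto elim!: eventually_mono)
  then show ?thesis
    using assms set_integrable_bounded_mult_continuous unfolding admissible_def by blast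
qed

lemma admissible_set_integrable:
  assumes "admissible T u1 u"
  shows "set_integrable lborel {0..T} u"
  using admissible_set_integrable_mult[OF assms, of "\<lambda>_. 1"] by simp

lemma state_set_integrable:
  assumes "admissible T u1 u" "continuous_on {0..T} R"
  shows "set_integrable lborel {0..T} (\<lambda>s. c - u s * R s)"
  using admissible_set_integrable_mult[OF assms] borel_integrable_atLeastAtMost'[of 0 T "\<lambda>_. c"]
  by auto

lemma is_state_increment:
  assumes R: "is_state T N \<sigma> R0 u R" and u: "admissible T u1 u"
    and "0 \<le> a" "a \<le> t" "t \<le> T"
  shows "R t = R a + (LINT s:{a<..t}|lborel. real N * \<sigma>\<^sup>2 - u s * R s)"
proof -
  define f where "f s = real N * \<sigma>\<^sup>2 - u s * R s" for s
  have R_eq: "\<And>t. t \<in> {0..T} \<Longrightarrow> R t = R0 + (LINT s:{0..t}|lborel. f s)"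
    using R unfolding is_state_def f_def by blast
  have "continuous_on {0..T} R" using R unfolding is_state_def by blast
  then have "set_integrable lborel {0..T} f"
    unfolding f_def by (rule state_set_integrable[OF u])
  then have "set_integrable lborel {0..t} f"
    by (rule set_integrable_subset) (use assms in auto)
  then have "(LINT s:{0..t}|lborel. f s) = (LINT s:{0..a}|lborel. f s) + (LINT s:{a<..t}|lborel. f s)"
    using assms by (intro set_integral_split_Icc) auto
  then show ?thesis
    using R_eq[of t] R_eq[of a] assms unfolding f_def by simp
qed

definition switch_off :: "real \<Rightarrow> (real \<Rightarrow> real) \<Rightarrow> real \<Rightarrow> real" where
  "switch_off a u s = (if s \<le> a then u s else 0)"

definition switch_off_state :: "nat \<Rightarrow> real \<Rightarrow> real \<Rightarrow> (real \<Rightarrow> real) \<Rightarrow> real \<Rightarrow> real" where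
  "switch_off_state N \<sigma> a R t = (if t \<le> a then R t else R a + real N * \<sigma>\<^sup>2 * (t - a))"

lemma admissible_switch_off:
  assumes "admissible T u1 u" "0 \<le> u1"
  shows "admissible T u1 (switch_off a u)"
proof -
  have "set_borel_measurable lborel {0..T} (\<lambda>s. indicator {..a} s * u s)"
    using assms(1) unfolding admissible_def
    by (intro set_borel_measurable_mult) (auto simp: set_borel_measurable_def)
  moreover have "(\<lambda>s. indicator {..a} s * u s) = switch_off a u"
    by (auto simp: indicator_def switch_off_def)
  ultimately show ?thesis
    using assms unfolding admissible_def by (auto simp: switch_off_def elim!: eventually_mono)
qed

lemma is_state_switch_off:
  assumes R: "is_state T N \<sigma> R0 u R" and u: "admissible T u1 u" "0 \<le> u1" and "0 \<le> a"
  shows "is_state T N \<sigma> R0 (switch_off a u) (switch_off_state N \<sigma> a R)"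
proof -
  define c where "c = real N * \<sigma>\<^sup>2"
  define v where "v = switch_off a u"
  define S where "S = switch_off_state N \<sigma> a R"
  have R_cont: "continuous_on {0..T} R" and "R 0 = R0"
    using R unfolding is_state_def by blast+
  have S_cont: "continuous_on {0..T} S"
    unfolding S_def switch_off_state_def
    by (intro continuous_on_cases_le continuous_on_subset[OF R_cont] continuous_intros) auto
  have S_int: "set_integrable lborel {0..T} (\<lambda>s. c - v s * S s)"
    unfolding v_def by (rule state_set_integrable[OF admissible_switch_off[OF u] S_cont])
  have "S t = R0 + (LINT s:{0..t}|lborel. c - v s * S s)" if t: "t \<in> {0..T}" for t
  proof (cases "t \<le> a")
    case True
    then have "(LINT s:{0..t}|lborel. c - v s * S s) = (LINT s:{0..t}|lborel. c - u s * R s)"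
      by (intro set_lebesgue_integral_cong) (auto simp: v_def S_def switch_off_def switch_off_state_def)
    moreover have "R t = R0 + (LINT s:{0..t}|lborel. c - u s * R s)"
      using R t unfolding is_state_def c_def by blast
    ultimately show ?thesis using True by (simp add: S_def switch_off_state_def)
  next
    case False
    have "set_integrable lborel {0..t} (\<lambda>s. c - v s * S s)"
      by (rule set_integrable_subset[OF S_int]) (use t in auto)
    then have "(LINT s:{0..t}|lborel. c - v s * S s)
        = (LINT s:{0..a}|lborel. c - v s * S s) + (LINT s:{a<..t}|lborel. c - v s * S s)"
      using False \<open>0 \<le> a\<close> by (intro set_integral_split_Icc) auto
    also have "(LINT s:{0..a}|lborel. c - v s * S s) = (LINT s:{0..a}|lborel. c - u s * R s)"
      by (intro set_lebesgue_integral_cong) (auto simp: v_def S_def switch_off_def switch_off_state_def)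
    also have "\<dots> = R a - R0"
      using R \<open>0 \<le> a\<close> False t unfolding is_state_def c_def by auto
    also have "(LINT s:{a<..t}|lborel. c - v s * S s) = (LINT s:{a<..t}|lborel. c)"
      by (intro set_lebesgue_integral_cong) (auto simp: v_def switch_off_def)
    also have "\<dots> = c * (t - a)"
      using False by (simp add: set_integral_const)
    finally show ?thesis
      using False by (simp add: S_def switch_off_state_def c_def)
  qed
  then show ?thesis
    using S_cont \<open>R 0 = R0\<close> \<open>0 \<le> a\<close>
    unfolding is_state_def S_def v_def c_def by (simp add: switch_off_state_def)
qed

lemma switch_off_state_minus_state_le:
  assumes R: "is_state T N \<sigma> R0 u R" and u: "admissible T u1 u"
    and M: "\<forall>t\<in>{0..T}. \<bar>R t\<bar> \<le> M" and "0 \<le> a" and s: "s \<in> {a<..T}"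
  shows "switch_off_state N \<sigma> a R s - R s \<le> M * (LINT x:{a<..T}|lborel. u x)"
proof -
  define c where "c = real N * \<sigma>\<^sup>2"
  have R_cont: "continuous_on {0..T} R" using R unfolding is_state_def by blast
  have sub_s: "{a<..s} \<subseteq> {0..T}" and sub_T: "{a<..T} \<subseteq> {0..T}" and "s \<in> {0..T}"
    using s \<open>0 \<le> a\<close> by auto
  then have "0 \<le> M" using M abs_ge_zero order_trans by blast
  have uR_int: "set_integrable lborel {a<..s} (\<lambda>x. u x * R x)"
    by (rule set_integrable_subset[OF admissible_set_integrable_mult[OF u R_cont] _ sub_s]) simp
  have uM_int: "set_integrable lborel A (\<lambda>x. u x * M)" if "A \<subseteq> {0..T}" "A \<in> sets lborel" for A
    using set_integrable_subset[OF admissible_set_integrable[OF u]] that by simp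
  have u_nonneg: "AE x in lborel. x \<in> {0..T} \<longrightarrow> 0 \<le> u x"
    using u unfolding admissible_def by (auto elim!: eventually_mono)
  have c_int: "set_integrable lborel {a<..s} (\<lambda>_. c)"
    using set_integrable_subset[OF borel_integrable_atLeastAtMost'[of 0 T "\<lambda>_. c"] _ sub_s] by simp
  have "R s = R a + (LINT x:{a<..s}|lborel. c - u x * R x)"
    unfolding c_def by (rule is_state_increment[OF R u \<open>0 \<le> a\<close>]) (use s in auto)
  also have "(LINT x:{a<..s}|lborel. c - u x * R x) = c * (s - a) - (LINT x:{a<..s}|lborel. u x * R x)"
    using set_integral_diff(2)[OF c_int uR_int] s by (simp add: set_integral_const)
  finally have "switch_off_state N \<sigma> a R s - R s = (LINT x:{a<..s}|lborel. u x * R x)"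
    using s by (simp add: switch_off_state_def c_def)
  also have "\<dots> \<le> (LINT x:{a<..s}|lborel. u x * M)"
    using u_nonneg
  proof (intro set_integral_mono_AE uR_int uM_int[OF sub_s], simp, eventually_elim)
    case (elim x)
    show ?case
    proof
      assume x: "x \<in> {a<..s}"
      then have "x \<in> {0..T}" using sub_s by blast
      then have "\<bar>R x\<bar> \<le> M" and "0 \<le> u x" using M elim by auto
      then have "R x \<le> M" by simp
      then show "u x * R x \<le> u x * M" using \<open>0 \<le> u x\<close> by (rule mult_left_mono)
    qed
  qed
  also have "\<dots> \<le> (LINT x:{a<..T}|lborel. u x * M)"
    using u_nonneg \<open>0 \<le> M\<close> sub_s sub_T
    by (intro set_integral_mono_set_nonneg uM_int) (auto elim!: eventually_mono)
  finally show ?thesis by (simp add: mult.commute)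
qed

lemma cost_switch_off_le:
  assumes R: "is_state T N \<sigma> R0 u R" and u: "admissible T u1 u" "0 \<le> u1"
    and M: "\<forall>t\<in>{0..T}. \<bar>R t\<bar> \<le> M" and "0 \<le> a" "a \<le> T" "0 \<le> \<alpha>"
  shows "cost T \<alpha> \<beta> (switch_off a u) (switch_off_state N \<sigma> a R) - cost T \<alpha> \<beta> u R
    \<le> (\<alpha> * M * (T - a) - \<beta>) * (LINT t:{a<..T}|lborel. u t)"
proof -
  define v where "v = switch_off a u"
  define S where "S = switch_off_state N \<sigma> a R"
  define I where "I = (LINT t:{a<..T}|lborel. u t)"
  define H where "H t = \<alpha> * R t + \<beta> * u t" for t
  define G where "G t = \<alpha> * S t + \<beta> * v t" for t
  have R_cont: "continuous_on {0..T} R"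
    using R unfolding is_state_def by blast
  have S_cont: "continuous_on {0..T} S"
    using is_state_switch_off[OF R u \<open>0 \<le> a\<close>] unfolding is_state_def S_def by blast
  have u_int: "set_integrable lborel {0..T} u"
    by (rule admissible_set_integrable[OF u(1)])
  have v_int: "set_integrable lborel {0..T} v"
    unfolding v_def by (rule admissible_set_integrable[OF admissible_switch_off[OF u]])
  have H_int: "set_integrable lborel {0..T} H"
    unfolding H_def using borel_integrable_atLeastAtMost'[OF R_cont] u_int by auto
  have G_int: "set_integrable lborel {0..T} G"
    unfolding G_def using borel_integrable_atLeastAtMost'[OF S_cont] v_int by auto
  have sub: "{a<..T} \<subseteq> {0..T}" using \<open>0 \<le> a\<close> by auto
  have tail_int: "set_integrable lborel {a<..T} f" if "set_integrable lborel {0..T} f" for f :: "real \<Rightarrow> real"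
    using set_integrable_subset[OF that _ sub] by simp
  have const_int: "set_integrable lborel {a<..T} (\<lambda>_. \<alpha> * (M * I))"
    by (rule tail_int[OF borel_integrable_atLeastAtMost']) simp
  have "(LINT t:{0..a}|lborel. G t) = (LINT t:{0..a}|lborel. H t)"
    by (intro set_lebesgue_integral_cong) (auto simp: G_def H_def S_def v_def switch_off_def switch_off_state_def)
  then have "cost T \<alpha> \<beta> v S - cost T \<alpha> \<beta> u R = (LINT t:{a<..T}|lborel. G t) - (LINT t:{a<..T}|lborel. H t)"
    unfolding cost_def G_def[symmetric] H_def[symmetric]
    using set_integral_split_Icc[OF G_int] set_integral_split_Icc[OF H_int] assms by simp
  also have "\<dots> = (LINT t:{a<..T}|lborel. G t - H t)"
    using set_integral_diff(2)[OF tail_int[OF G_int] tail_int[OF H_int]] by simp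
  also have "\<dots> \<le> (LINT t:{a<..T}|lborel. \<alpha> * (M * I) - \<beta> * u t)"
  proof (rule set_integral_mono)
    show "set_integrable lborel {a<..T} (\<lambda>t. G t - H t)"
      using tail_int[OF G_int] tail_int[OF H_int] by (rule set_integral_diff(1))
    show "set_integrable lborel {a<..T} (\<lambda>t. \<alpha> * (M * I) - \<beta> * u t)"
      using const_int set_integrable_mult_right[OF tail_int[OF u_int]] by (rule set_integral_diff(1))
    fix t assume t: "t \<in> {a<..T}"
    have "S t - R t \<le> M * I"
      using switch_off_state_minus_state_le[OF R u(1) M \<open>0 \<le> a\<close> t] unfolding S_def I_def .
    moreover have "G t - H t = \<alpha> * (S t - R t) - \<beta> * u t"
      using t by (simp add: G_def H_def v_def switch_off_def right_diff_distrib)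
    ultimately show "G t - H t \<le> \<alpha> * (M * I) - \<beta> * u t"
      using \<open>0 \<le> \<alpha>\<close> by (simp add: mult_left_mono)
  qed
  also have "\<dots> = (T - a) * (\<alpha> * (M * I)) - \<beta> * I"
    using set_integral_diff(2)[OF const_int set_integrable_mult_right[OF tail_int[OF u_int]]] \<open>a \<le> T\<close>
    by (simp add: set_integral_const I_def)
  also have "\<dots> = (\<alpha> * M * (T - a) - \<beta>) * I"
    by (simp add: algebra_simps)
  finally show ?thesis unfolding v_def S_def I_def .
qed

theorem lemma3:
  fixes T \<alpha> \<beta> \<sigma> u1 R0 :: real and N :: nat and uh :: "real \<Rightarrow> real"
  assumes "T > 0" "\<alpha> > 0" "\<beta> > 0" "\<sigma> > 0" "u1 > 0" "N > 0"
    and "optimal_control T \<alpha> \<beta> \<sigma> u1 N R0 uh"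
  shows "\<exists>\<epsilon>>0. \<epsilon> \<le> T \<and> (AE t in lborel. t \<in> {T - \<epsilon><..<T} \<longrightarrow> uh t = 0)"
proof -
  obtain R where R: "is_state T N \<sigma> R0 uh R" and u: "admissible T u1 uh"
    and opt: "\<And>v S. admissible T u1 v \<Longrightarrow> is_state T N \<sigma> R0 v S \<Longrightarrow> cost T \<alpha> \<beta> uh R \<le> cost T \<alpha> \<beta> v S"
    using assms(7) unfolding optimal_control_def by blast
  have "bounded (R ` {0..T})"
    using R compact_imp_bounded compact_continuous_image[OF _ compact_Icc] unfolding is_state_def by blast
  then obtain M where "M > 0" and M: "\<forall>t\<in>{0..T}. \<bar>R t\<bar> \<le> M"
    unfolding bounded_pos by auto
  define \<epsilon> where "\<epsilon> = min T (\<beta> / (2 * \<alpha> * M))"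
  have "0 < \<epsilon>" "\<epsilon> \<le> T" using assms \<open>M > 0\<close> by (auto simp: \<epsilon>_def)
  have "\<alpha> * M * \<epsilon> \<le> \<beta> / 2"
    using assms \<open>M > 0\<close> unfolding \<epsilon>_def min_def by (auto simp: field_simps)
  define I where "I = (LINT t:{T - \<epsilon><..T}|lborel. uh t)"
  have u_nonneg: "AE t in lborel. t \<in> {T - \<epsilon><..T} \<longrightarrow> 0 \<le> uh t"
    using u \<open>\<epsilon> \<le> T\<close> unfolding admissible_def by (auto elim!: eventually_mono)
  have u_int: "set_integrable lborel {T - \<epsilon><..T} uh"
    by (rule set_integrable_subset[OF admissible_set_integrable[OF u]]) (use \<open>\<epsilon> \<le> T\<close> in auto)
  have "0 \<le> I"
    using u_nonneg unfolding I_def set_lebesgue_integral_def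
    by (intro integral_nonneg_AE) (auto simp: indicator_def elim!: eventually_mono)
  have "0 \<le> cost T \<alpha> \<beta> (switch_off (T - \<epsilon>) uh) (switch_off_state N \<sigma> (T - \<epsilon>) R) - cost T \<alpha> \<beta> uh R"
    using opt admissible_switch_off is_state_switch_off R u assms \<open>\<epsilon> \<le> T\<close> by simp
  also have "\<dots> \<le> (\<alpha> * M * \<epsilon> - \<beta>) * I"
    using cost_switch_off_le[OF R u _ M, of "T - \<epsilon>" \<alpha> \<beta>] assms \<open>0 < \<epsilon>\<close> \<open>\<epsilon> \<le> T\<close> unfolding I_def by simp
  also have "\<dots> \<le> - (\<beta> / 2) * I"
    using \<open>\<alpha> * M * \<epsilon> \<le> \<beta> / 2\<close> \<open>0 \<le> I\<close> by (intro mult_right_mono) auto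
  finally have "I = 0" using \<open>0 \<le> I\<close> \<open>\<beta> > 0\<close> by (simp add: mult_le_0_iff)
  then have "AE t in lborel. t \<in> {T - \<epsilon><..T} \<longrightarrow> uh t = 0"
    using set_integral_nonneg_eq_0_AE[OF u_int u_nonneg] unfolding I_def by blast
  then show ?thesis
    using \<open>0 < \<epsilon>\<close> \<open>\<epsilon> \<le> T\<close> by (auto elim!: eventually_mono)
qed

end
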